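(* Let $d\ge 1$ and $n$ be integers with $n\le d+1$, let $r>0$, let $B\subset\mathbb{R}^d$ be the closed Euclidean ball of radius $r$ centered at the origin, and let $S=\partial B$ be its boundary sphere. Consider the maximization of $E(\mathrm{MST}(X))$ over all point sets $X\subset B$ of cardinality $n$. The maximum is attained when the points of $X$ lie on $S$, at the vertices of a regular $(n-1)$-simplex that has $S$ as its smallest circumscribing sphere.
   Context: For a finite set $Z\subset\mathbb{R}^d$, a spanning tree of $Z$ is a connected acyclic undirected graph with vertex set $Z$; its length is $E(G)=\sum_{(z,z')\text{ edge of }G}\|z-z'\|_2$. $E(\mathrm{MST}(Z))$ denotes the minimum of $E(G)$ over all spanning trees $G$ of $Z$ (the length of a minimum spanning tree). A $k$-simplex is the convex hull of $k+1$ affinely independent points; it is regular if all pairwise distances between its vertices are equal. *)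

theory Defs
  imports "HOL-Analysis.Analysis"
begin

definition graph_edges :: "'a set \<Rightarrow> 'a set set" where
  "graph_edges Z = {{x, y} | x y. x \<in> Z \<and> y \<in> Z \<and> x \<noteq> y}"

definition adj :: "'a set set \<Rightarrow> 'a \<Rightarrow> 'a \<Rightarrow> bool" where
  "adj T x y \<longleftrightarrow> {x, y} \<in> T \<and> x \<noteq> y"

definition graph_connected :: "'a set \<Rightarrow> 'a set set \<Rightarrow> bool" where
  "graph_connected Z T \<longleftrightarrow> (\<forall>x\<in>Z. \<forall>y\<in>Z. (adj T)\<^sup>*\<^sup>* x y)"

definition is_cycle :: "'a set set \<Rightarrow> 'a list \<Rightarrow> bool" where
  "is_cycle T vs \<longleftrightarrow> length vs \<ge> 3 \<and> distinct vs \<and>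
     (\<forall>i. Suc i < length vs \<longrightarrow> adj T (vs ! i) (vs ! Suc i)) \<and>
     adj T (last vs) (hd vs)"

definition graph_acyclic :: "'a set set \<Rightarrow> bool" where
  "graph_acyclic T \<longleftrightarrow> \<not> (\<exists>vs. is_cycle T vs)"

definition spanning_tree :: "'a set \<Rightarrow> 'a set set \<Rightarrow> bool" where
  "spanning_tree Z T \<longleftrightarrow> T \<subseteq> graph_edges Z \<and> graph_connected Z T \<and> graph_acyclic T"

text \<open>Length of a graph: sum of Euclidean lengths of its edges (each unordered edge
  {x,y} appears as the two ordered pairs (x,y),(y,x), hence the factor 1/2).\<close>
definition graph_length :: "'a::real_normed_vector set set \<Rightarrow> real" where
  "graph_length T = (\<Sum>p\<in>{(x, y). {x, y} \<in> T \<and> x \<noteq> y}. norm (fst p - snd p)) / 2"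

definition mst_length :: "'a::real_normed_vector set \<Rightarrow> real" where
  "mst_length Z = Inf (graph_length ` {T. spanning_tree Z T})"

definition regular_simplex_vertices :: "nat \<Rightarrow> 'a::euclidean_space set \<Rightarrow> bool" where
  "regular_simplex_vertices n Y \<longleftrightarrow> finite Y \<and> card Y = n \<and> \<not> affine_dependent Y \<and>
     (\<exists>c. \<forall>x\<in>Y. \<forall>y\<in>Y. x \<noteq> y \<longrightarrow> dist x y = c)"

definition smallest_circumsphere :: "'a::euclidean_space set \<Rightarrow> real \<Rightarrow> bool" where
  "smallest_circumsphere Y r \<longleftrightarrow> Y \<subseteq> sphere 0 r \<and>
     (\<forall>c \<rho>. Y \<subseteq> sphere c \<rho> \<longrightarrow> r \<le> \<rho>)"

end

(* Every spanning tree of an n-point set with all mutual distances c has at least n - 1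
   edges, so the minimum spanning tree of such a set has length (n - 1) c.  If Y is the vertex
   set of a regular simplex whose smallest circumsphere is the sphere of radius r about 0, the
   centroid of Y is also a circumcentre, and minimality forces it to be 0; summing
   |y - y'|^2 over all pairs then gives (n - 1) c^2 = 2 n r^2, i.e. MST(Y) = sqrt (2 n (n - 1)) r.
   For any n points X in the ball, the same double sum equals 2 n sum |x|^2 - 2 |sum x|^2,
   which is at most 2 n^2 r^2, so some x0 in X has sum |x0 - x|^2 <= 2 n r^2; by Cauchy-Schwarz
   the star centred at x0 is a spanning tree of length at most sqrt (2 n (n - 1)) r.
   A regular simplex exists: n - 1 orthonormal vectors and a suitable point on their diagonal
   are pairwise equidistant, and centring and scaling put them on the sphere. *)

theory Submission
  imports Defs
begin

definition equidistant :: "'a::metric_space set \<Rightarrow> real \<Rightarrow> bool" where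
  "equidistant Y c \<longleftrightarrow> (\<forall>x\<in>Y. \<forall>y\<in>Y. x \<noteq> y \<longrightarrow> dist x y = c)"

lemma sum_dist_equidistant:
  fixes f :: "real \<Rightarrow> real"
  assumes "finite Y" "equidistant Y c" "y \<in> Y" "f 0 = 0"
  shows "(\<Sum>y'\<in>Y. f (dist y y')) = (real (card Y) - 1) * f c"
proof -
  have "f (dist y y') = f c" if "y' \<in> Y - {y}" for y'
    using assms(2,3) that unfolding equidistant_def by auto
  then have "(\<Sum>y'\<in>Y - {y}. f (dist y y')) = real (card (Y - {y})) * f c"
    by simp
  moreover have "(\<Sum>y'\<in>Y. f (dist y y')) = f (dist y y) + (\<Sum>y'\<in>Y - {y}. f (dist y y'))"
    by (rule sum.remove[OF assms(1,3)])
  moreover have "1 \<le> card Y"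
    using assms(1,3) by (metis One_nat_def Suc_leI card_gt_0_iff empty_iff)
  ultimately show ?thesis
    using assms(1,3,4) by (simp add: of_nat_diff)
qed

section \<open>Minimum spanning trees of equilateral sets\<close>

definition star_graph :: "'a \<Rightarrow> 'a set \<Rightarrow> 'a set set" where
  "star_graph x0 X = {{x0, y} | y. y \<in> X \<and> y \<noteq> x0}"

lemma star_graph_edge: "{a, b} \<in> star_graph x0 X \<Longrightarrow> x0 \<in> {a, b}"
  unfolding star_graph_def by (auto simp: doubleton_eq_iff)

lemma graph_acyclic_star_graph: "graph_acyclic (star_graph x0 X)"
  unfolding graph_acyclic_def
proof
  assume "\<exists>vs. is_cycle (star_graph x0 X) vs"
  then obtain vs where "is_cycle (star_graph x0 X) vs" ..
  then have l: "length vs \<ge> 3" and d: "distinct vs"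
    and edges: "\<And>i. Suc i < length vs \<Longrightarrow> {vs ! i, vs ! Suc i} \<in> star_graph x0 X"
    and closing: "{last vs, hd vs} \<in> star_graph x0 X"
    unfolding is_cycle_def adj_def by auto
  have step: "x0 \<in> {vs ! i, vs ! Suc i}" if "Suc i < length vs" for i
    using edges[OF that] by (rule star_graph_edge)
  have close: "x0 \<in> {last vs, hd vs}"
    using closing by (rule star_graph_edge)
  have ne: "vs ! i \<noteq> vs ! j" if "i < length vs" "j < length vs" "i \<noteq> j" for i j
    using d that by (simp add: nth_eq_iff_index_eq)
  have "vs ! 0 \<noteq> vs ! 1" "vs ! 0 \<noteq> vs ! 2" "vs ! 1 \<noteq> vs ! (length vs - 1)"
    by (rule ne; use l in auto)+
  moreover have "x0 \<in> {vs ! 0, vs ! 1}" "x0 \<in> {vs ! 1, vs ! 2}"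
    using step[of 0] step[of 1] l by (simp_all add: numeral_2_eq_2)
  moreover have "x0 \<in> {vs ! (length vs - 1), vs ! 0}"
    using close l by (simp add: last_conv_nth hd_conv_nth flip: length_greater_0_conv)
  ultimately show False
    by auto
qed

lemma spanning_tree_star_graph:
  assumes "x0 \<in> X"
  shows "spanning_tree X (star_graph x0 X)"
proof -
  have "adj (star_graph x0 X) x0 y" "adj (star_graph x0 X) y x0" if "y \<in> X" "y \<noteq> x0" for y
    using that unfolding adj_def star_graph_def by (auto simp: insert_commute)
  then have "(adj (star_graph x0 X))\<^sup>*\<^sup>* x0 y" "(adj (star_graph x0 X))\<^sup>*\<^sup>* y x0" if "y \<in> X" for y
    using that by (metis r_into_rtranclp rtranclp.rtrancl_refl)+
  then have "graph_connected X (star_graph x0 X)"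
    unfolding graph_connected_def by (meson rtranclp_trans)
  moreover have "star_graph x0 X \<subseteq> graph_edges X"
    using assms unfolding star_graph_def graph_edges_def by blast
  ultimately show ?thesis
    by (simp add: spanning_tree_def graph_acyclic_star_graph)
qed

definition graph_arcs :: "'a set set \<Rightarrow> ('a \<times> 'a) set" where
  "graph_arcs T = {(x, y). {x, y} \<in> T \<and> x \<noteq> y}"

lemma graph_length_arcs: "graph_length T = (\<Sum>(x, y)\<in>graph_arcs T. norm (x - y)) / 2"
  unfolding graph_length_def graph_arcs_def by (simp add: case_prod_beta)

lemma graph_length_nonneg: "0 \<le> graph_length T"
  unfolding graph_length_def by (simp add: sum_nonneg)

lemma graph_length_star_graph:
  fixes X :: "'a::real_normed_vector set"
  assumes "finite X" "x0 \<in> X"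
  shows "graph_length (star_graph x0 X) = (\<Sum>y\<in>X. norm (x0 - y))"
proof -
  let ?out = "(\<lambda>y. (x0, y)) ` (X - {x0})" and ?in = "(\<lambda>y. (y, x0)) ` (X - {x0})"
  have arcs: "graph_arcs (star_graph x0 X) = ?out \<union> ?in"
    unfolding graph_arcs_def star_graph_def by (auto simp: doubleton_eq_iff)
  have "(\<Sum>(x, y)\<in>?out \<union> ?in. norm (x - y)) =
      (\<Sum>(x, y)\<in>?out. norm (x - y)) + (\<Sum>(x, y)\<in>?in. norm (x - y))"
    using assms by (intro sum.union_disjoint) auto
  also have "\<dots> = 2 * (\<Sum>y\<in>X - {x0}. norm (x0 - y))"
    by (simp add: sum.reindex inj_on_def norm_minus_commute)
  also have "(\<Sum>y\<in>X - {x0}. norm (x0 - y)) = (\<Sum>y\<in>X. norm (x0 - y))"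
    using assms by (intro sum.mono_neutral_left) auto
  finally show ?thesis
    unfolding graph_length_arcs arcs by simp
qed

lemma mst_length_le_graph_length:
  assumes "spanning_tree Z T"
  shows "mst_length Z \<le> graph_length T"
proof -
  have "bdd_below (graph_length ` {T. spanning_tree Z T})"
    by (rule bdd_belowI2) (rule graph_length_nonneg)
  then show ?thesis
    unfolding mst_length_def by (rule cInf_lower[rotated]) (use assms in blast)
qed

lemma mst_length_greatest:
  assumes "z \<in> Z" and "\<And>T. spanning_tree Z T \<Longrightarrow> L \<le> graph_length T"
  shows "L \<le> mst_length Z"
  unfolding mst_length_def
  by (rule cInf_greatest) (use assms spanning_tree_star_graph[OF assms(1)] in auto)

lemma graph_connected_parent:
  assumes "graph_connected Z T" and "z0 \<in> Z"
  obtains p :: "'a \<Rightarrow> 'a" and k :: "'a \<Rightarrow> nat"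
  where "\<And>y. y \<in> Z - {z0} \<Longrightarrow> adj T (p y) y \<and> k (p y) < k y"
proof -
  define k where "k y = (LEAST j. (adj T ^^ j) z0 y)" for y
  have path: "(adj T ^^ k y) z0 y" if "y \<in> Z" for y
    using assms that unfolding graph_connected_def k_def by (metis LeastI rtranclp_power)
  have parent: "\<exists>z. adj T z y \<and> k z < k y" if y: "y \<in> Z - {z0}" for y
  proof -
    obtain j where j: "k y = Suc j"
      using path[of y] y by (cases "k y") auto
    then have "(adj T ^^ Suc j) z0 y"
      using path[of y] y by simp
    then obtain z where z: "(adj T ^^ j) z0 z" "adj T z y"
      by (rule relpowp_Suc_E)
    have "k z \<le> j"
      unfolding k_def using z(1) by (rule Least_le)
    with z j show ?thesis by auto
  qed
  define p where "p y = (SOME z. adj T z y \<and> k z < k y)" for y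
  have "adj T (p y) y \<and> k (p y) < k y" if "y \<in> Z - {z0}" for y
    unfolding p_def using parent[OF that] by (rule someI_ex)
  then show thesis
    by (rule that)
qed

lemma card_graph_arcs_ge:
  assumes "finite Z" "z0 \<in> Z" "T \<subseteq> graph_edges Z" "graph_connected Z T"
  shows "2 * (card Z - 1) \<le> card (graph_arcs T)"
proof -
  obtain p and k :: "'a \<Rightarrow> nat" where p: "\<And>y. y \<in> Z - {z0} \<Longrightarrow> adj T (p y) y \<and> k (p y) < k y"
    using graph_connected_parent[OF assms(4,2)] by blast
  let ?up = "(\<lambda>y. (y, p y)) ` (Z - {z0})" and ?down = "(\<lambda>y. (p y, y)) ` (Z - {z0})"
  have "graph_arcs T \<subseteq> Z \<times> Z"
    using assms(3) unfolding graph_arcs_def graph_edges_def by (auto simp: doubleton_eq_iff)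
  then have fin: "finite (graph_arcs T)"
    by (rule finite_subset) (simp add: assms(1))
  have "(y, p y) \<in> graph_arcs T \<and> (p y, y) \<in> graph_arcs T" if "y \<in> Z - {z0}" for y
    using p[OF that] unfolding graph_arcs_def adj_def by (auto simp: insert_commute)
  then have sub: "?up \<union> ?down \<subseteq> graph_arcs T"
    by blast
  have disj: "?up \<inter> ?down = {}"
  proof (rule ccontr)
    assume "?up \<inter> ?down \<noteq> {}"
    then obtain y y' where "y \<in> Z - {z0}" "y' \<in> Z - {z0}" "y = p y'" "p y = y'"
      by auto
    then show False
      using p by (metis less_asym)
  qed
  have "2 * (card Z - 1) = card ?up + card ?down"
    using assms(1,2) by (simp add: card_image inj_on_def)
  also have "\<dots> = card (?up \<union> ?down)"
    using disj assms(1) by (simp add: card_Un_disjoint)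
  also have "\<dots> \<le> card (graph_arcs T)"
    using fin sub by (rule card_mono)
  finally show ?thesis .
qed

lemma graph_length_equidistant_ge:
  fixes Z :: "'a::real_normed_vector set"
  assumes "finite Z" "z0 \<in> Z" "T \<subseteq> graph_edges Z" "graph_connected Z T" "equidistant Z c"
  shows "(real (card Z) - 1) * c \<le> graph_length T"
proof (cases "card Z \<le> 1")
  case True
  moreover have "card Z > 0"
    using assms(1,2) card_gt_0_iff by blast
  ultimately have "card Z = 1"
    by linarith
  then show ?thesis
    using graph_length_nonneg[of T] by simp
next
  case False
  then obtain x y where "x \<in> Z" "y \<in> Z" "x \<noteq> y"
    using assms(1) by (auto simp: card_le_Suc0_iff_eq)
  then have "c \<ge> 0"
    using assms(5) unfolding equidistant_def by (metis zero_le_dist)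
  have "graph_arcs T \<subseteq> Z \<times> Z"
    using assms(3) unfolding graph_arcs_def graph_edges_def by (auto simp: doubleton_eq_iff)
  then have "(\<Sum>(x, y)\<in>graph_arcs T. norm (x - y)) = (\<Sum>_\<in>graph_arcs T. c)"
    using assms(5) unfolding equidistant_def by (intro sum.cong) (auto simp: graph_arcs_def dist_norm)
  also have "\<dots> = real (card (graph_arcs T)) * c"
    by simp
  finally have "graph_length T = real (card (graph_arcs T)) * c / 2"
    by (simp add: graph_length_arcs)
  moreover have "2 * (real (card Z) - 1) \<le> real (card (graph_arcs T))"
  proof -
    have "real (2 * (card Z - 1)) \<le> real (card (graph_arcs T))"
      using card_graph_arcs_ge[OF assms(1-4)] by (rule of_nat_mono)
    then show ?thesis
      using False by (simp add: of_nat_diff)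
  qed
  then have "2 * (real (card Z) - 1) * c \<le> real (card (graph_arcs T)) * c"
    using \<open>c \<ge> 0\<close> by (rule mult_right_mono)
  ultimately show ?thesis
    by (simp add: algebra_simps)
qed

lemma mst_length_equidistant:
  fixes Z :: "'a::real_normed_vector set"
  assumes "finite Z" "z0 \<in> Z" "equidistant Z c"
  shows "mst_length Z = (real (card Z) - 1) * c"
proof (rule antisym)
  have "(\<Sum>y\<in>Z. norm (z0 - y)) = (real (card Z) - 1) * c"
    using sum_dist_equidistant[OF assms(1,3,2), of "\<lambda>t. t"] by (simp add: dist_norm)
  then show "mst_length Z \<le> (real (card Z) - 1) * c"
    using mst_length_le_graph_length[OF spanning_tree_star_graph[OF assms(2)]]
    by (simp add: graph_length_star_graph assms(1,2))
  show "(real (card Z) - 1) * c \<le> mst_length Z"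
    using assms graph_length_equidistant_ge
    by (intro mst_length_greatest[OF assms(2)]) (auto simp: spanning_tree_def)
qed

section \<open>Point sets in a ball\<close>

lemma power2_norm_diff:
  fixes x y :: "'a::real_inner"
  shows "(norm (x - y))\<^sup>2 = (norm x)\<^sup>2 - 2 * inner x y + (norm y)\<^sup>2"
  by (simp add: power2_norm_eq_inner inner_diff inner_commute)

lemma sum_norm_diff_sq:
  fixes x :: "'a::real_inner"
  shows "(\<Sum>y\<in>Y. (norm (x - y))\<^sup>2) = real (card Y) * (norm x)\<^sup>2 - 2 * inner x (\<Sum>Y) + (\<Sum>y\<in>Y. (norm y)\<^sup>2)"
  by (simp add: power2_norm_diff inner_sum_right sum.distrib sum_subtractf sum_distrib_left)

lemma sum_sum_norm_diff_sq:
  fixes Y :: "'a::real_inner set"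
  shows "(\<Sum>x\<in>Y. \<Sum>y\<in>Y. (norm (x - y))\<^sup>2) = 2 * real (card Y) * (\<Sum>y\<in>Y. (norm y)\<^sup>2) - 2 * (norm (\<Sum>Y))\<^sup>2"
proof -
  have "(\<Sum>x\<in>Y. 2 * inner x (\<Sum>Y)) = 2 * (norm (\<Sum>Y))\<^sup>2"
    by (simp add: power2_norm_eq_inner inner_sum_left flip: sum_distrib_left)
  then show ?thesis
    by (simp add: sum_norm_diff_sq sum.distrib sum_subtractf flip: sum_distrib_left)
qed

lemma exists_sum_norm_diff_sq_le:
  fixes X :: "'a::real_inner set"
  assumes "finite X" "X \<noteq> {}" "X \<subseteq> cball 0 r"
  obtains x0 where "x0 \<in> X" "(\<Sum>y\<in>X. (norm (x0 - y))\<^sup>2) \<le> 2 * real (card X) * r\<^sup>2"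
proof -
  define g where "g x = (\<Sum>y\<in>X. (norm (x - y))\<^sup>2)" for x
  define x0 where "x0 = arg_min_on g X"
  have "x0 \<in> X"
    unfolding x0_def by (rule arg_min_if_finite(1)[OF assms(1,2)])
  have "real (card X) * g x0 \<le> (\<Sum>x\<in>X. g x)"
    using arg_min_least[OF assms(1,2)] unfolding x0_def by (intro sum_bounded_below)
  also have "\<dots> \<le> 2 * real (card X) * (\<Sum>y\<in>X. (norm y)\<^sup>2)"
    unfolding g_def sum_sum_norm_diff_sq by simp
  also have "\<dots> \<le> 2 * real (card X) * (\<Sum>y\<in>X. r\<^sup>2)"
    using assms(3) by (intro mult_left_mono sum_mono power_mono) auto
  finally have "real (card X) * g x0 \<le> real (card X) * (2 * real (card X) * r\<^sup>2)"
    by (simp add: algebra_simps)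
  moreover have "real (card X) > 0"
    using assms(1,2) by (simp add: card_gt_0_iff)
  ultimately show thesis
    using that[OF \<open>x0 \<in> X\<close>] unfolding g_def by simp
qed

lemma mst_length_le_cball:
  fixes X :: "'a::real_inner set"
  assumes "finite X" "X \<noteq> {}" "X \<subseteq> cball 0 r"
  shows "mst_length X \<le> sqrt (2 * real (card X) * (real (card X) - 1)) * r"
proof -
  obtain x0 where x0: "x0 \<in> X" and sq: "(\<Sum>y\<in>X. (norm (x0 - y))\<^sup>2) \<le> 2 * real (card X) * r\<^sup>2"
    using exists_sum_norm_diff_sq_le[OF assms] .
  have "r \<ge> 0"
    using assms(3) x0 by (meson mem_cball_0 norm_ge_zero order_trans subsetD)
  have card: "real (card (X - {x0})) = real (card X) - 1"
    using assms(1,2) x0 by (simp add: of_nat_diff Suc_le_eq card_gt_0_iff)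
  have "mst_length X \<le> (\<Sum>y\<in>X. norm (x0 - y))"
    using mst_length_le_graph_length[OF spanning_tree_star_graph[OF x0]]
    by (simp add: graph_length_star_graph[OF assms(1) x0])
  also have "\<dots> = (\<Sum>y\<in>X - {x0}. norm (x0 - y))"
    using sum.remove[OF assms(1) x0, of "\<lambda>y. norm (x0 - y)"] by simp
  also have "\<dots> \<le> sqrt (2 * real (card X) * (real (card X) - 1)) * r"
  proof (rule power2_le_imp_le)
    have "(\<Sum>y\<in>X - {x0}. norm (x0 - y))\<^sup>2 \<le> (\<Sum>y\<in>X - {x0}. (norm (x0 - y))\<^sup>2) * (real (card X) - 1)"
      using sum_squared_le_sum_of_squares[of "\<lambda>y. norm (x0 - y)" "X - {x0}"] card by simp
    also have "\<dots> \<le> 2 * real (card X) * r\<^sup>2 * (real (card X) - 1)"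
      using sq sum.remove[OF assms(1) x0, of "\<lambda>y. (norm (x0 - y))\<^sup>2"] card
      by (intro mult_right_mono) auto
    also have "\<dots> = (sqrt (2 * real (card X) * (real (card X) - 1)) * r)\<^sup>2"
      using card by (simp add: power_mult_distrib)
    finally show "(\<Sum>y\<in>X - {x0}. norm (x0 - y))\<^sup>2 \<le> (sqrt (2 * real (card X) * (real (card X) - 1)) * r)\<^sup>2" .
    show "0 \<le> sqrt (2 * real (card X) * (real (card X) - 1)) * r"
      using \<open>r \<ge> 0\<close> card by simp
  qed
  finally show ?thesis .
qed

section \<open>Regular simplices and their circumspheres\<close>

lemma sum_norm_diff_sq_sphere:
  fixes x :: "'a::real_inner"
  assumes "Y \<subseteq> sphere 0 r"
  shows "(\<Sum>y\<in>Y. (norm (x - y))\<^sup>2) = real (card Y) * ((norm x)\<^sup>2 + r\<^sup>2) - 2 * inner x (\<Sum>Y)"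
proof -
  have "(\<Sum>y\<in>Y. (norm y)\<^sup>2) = real (card Y) * r\<^sup>2"
    using assms by (simp add: subset_iff)
  then show ?thesis
    by (simp add: sum_norm_diff_sq algebra_simps)
qed

lemma sum_norm_diff_sq_sphere_center:
  fixes x :: "'a::real_inner"
  assumes "Y \<subseteq> sphere x \<rho>"
  shows "(\<Sum>y\<in>Y. (norm (x - y))\<^sup>2) = real (card Y) * \<rho>\<^sup>2"
  using assms by (simp add: subset_iff dist_norm)

lemma equidistant_centroid_sphere:
  fixes Y :: "'a::real_inner set"
  assumes "finite Y" "equidistant Y c"
  obtains \<rho> where "Y \<subseteq> sphere ((1 / real (card Y)) *\<^sub>R \<Sum>Y) \<rho>"
proof -
  define n where "n = real (card Y)"
  define m where "m = (1 / n) *\<^sub>R \<Sum>Y"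
  define S where "S = (\<Sum>y\<in>Y. (norm y)\<^sup>2)"
  define R where "R = ((n - 1) * c\<^sup>2 - S) / n + (norm m)\<^sup>2"
  have "dist m y = sqrt R" if "y \<in> Y" for y
  proof -
    have "n > 0"
      using assms(1) that unfolding n_def by (auto simp: card_gt_0_iff)
    have "n * (norm y)\<^sup>2 - 2 * inner y (\<Sum>Y) + S = (n - 1) * c\<^sup>2"
      using sum_norm_diff_sq[of y Y] sum_dist_equidistant[OF assms that, of "\<lambda>t. t\<^sup>2"]
      unfolding n_def S_def by (simp add: dist_norm)
    then have "(norm y)\<^sup>2 - 2 * inner y m = ((n - 1) * c\<^sup>2 - S) / n"
      using \<open>n > 0\<close> unfolding m_def by (simp add: field_simps)
    then have "(norm (y - m))\<^sup>2 = R"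
      unfolding R_def power2_norm_diff by simp
    then show ?thesis
      by (metis dist_norm norm_minus_commute real_sqrt_abs abs_norm_cancel)
  qed
  then show thesis
    by (intro that[of "sqrt R"]) (auto simp: m_def n_def)
qed

lemma smallest_circumsphere_centroid_eq_0:
  fixes Y :: "'a::euclidean_space set"
  assumes "finite Y" "Y \<noteq> {}" "smallest_circumsphere Y r"
    and "Y \<subseteq> sphere ((1 / real (card Y)) *\<^sub>R \<Sum>Y) \<rho>"
  shows "\<Sum>Y = 0"
proof -
  define n where "n = real (card Y)"
  define m where "m = (1 / n) *\<^sub>R \<Sum>Y"
  have "n > 0"
    using assms(1,2) unfolding n_def by (auto simp: card_gt_0_iff)
  have centroid: "Y \<subseteq> sphere m \<rho>"
    using assms(4) unfolding m_def n_def .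
  have sphere: "Y \<subseteq> sphere 0 r" and smallest: "r \<le> \<rho>"
    using assms(3) centroid unfolding smallest_circumsphere_def by auto
  have sum: "\<Sum>Y = n *\<^sub>R m"
    using \<open>n > 0\<close> unfolding m_def by simp
  have "n * \<rho>\<^sup>2 = n * ((norm m)\<^sup>2 + r\<^sup>2) - 2 * inner m (n *\<^sub>R m)"
    using sum_norm_diff_sq_sphere[OF sphere, of m] sum_norm_diff_sq_sphere_center[OF centroid]
    unfolding n_def sum by simp
  then have "n * (\<rho>\<^sup>2 + (norm m)\<^sup>2) = n * r\<^sup>2"
    by (simp add: power2_norm_eq_inner algebra_simps)
  then have "\<rho>\<^sup>2 = r\<^sup>2 - (norm m)\<^sup>2"
    using \<open>n > 0\<close> by simp
  moreover have "r\<^sup>2 \<le> \<rho>\<^sup>2"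
    using smallest sphere assms(2) by (intro power_mono) auto
  ultimately have "m = 0"
    by simp
  then show ?thesis
    using sum by simp
qed

lemma smallest_circumsphere_if_sum_eq_0:
  fixes Y :: "'a::euclidean_space set"
  assumes "finite Y" "Y \<noteq> {}" "Y \<subseteq> sphere 0 r" "\<Sum>Y = 0"
  shows "smallest_circumsphere Y r"
  unfolding smallest_circumsphere_def
proof (intro conjI allI impI)
  fix x \<rho> assume "Y \<subseteq> sphere x \<rho>"
  have "real (card Y) > 0"
    using assms(1,2) by (auto simp: card_gt_0_iff)
  moreover have "real (card Y) * \<rho>\<^sup>2 = real (card Y) * ((norm x)\<^sup>2 + r\<^sup>2)"
    using sum_norm_diff_sq_sphere[OF assms(3), of x] sum_norm_diff_sq_sphere_center[OF \<open>Y \<subseteq> sphere x \<rho>\<close>]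
      assms(4) by simp
  ultimately have "r\<^sup>2 \<le> \<rho>\<^sup>2"
    by simp
  moreover have "\<rho> \<ge> 0"
    using \<open>Y \<subseteq> sphere x \<rho>\<close> assms(2) by auto
  ultimately show "r \<le> \<rho>"
    by (rule power2_le_imp_le)
qed (use assms(3) in simp)

lemma equidistant_sphere_edge_length:
  fixes Y :: "'a::real_inner set"
  assumes "finite Y" "Y \<noteq> {}" "equidistant Y c" "Y \<subseteq> sphere 0 r" "\<Sum>Y = 0"
  shows "(real (card Y) - 1) * c\<^sup>2 = 2 * real (card Y) * r\<^sup>2"
proof -
  have "real (card Y) > 0"
    using assms(1,2) by (auto simp: card_gt_0_iff)
  have "(\<Sum>y\<in>Y. (norm y)\<^sup>2) = real (card Y) * r\<^sup>2"
    using assms(4) by (simp add: subset_iff)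
  have "real (card Y) * ((real (card Y) - 1) * c\<^sup>2) = (\<Sum>x\<in>Y. \<Sum>y\<in>Y. (norm (x - y))\<^sup>2)"
    using sum_dist_equidistant[OF assms(1,3), of _ "\<lambda>t. t\<^sup>2"] by (simp add: dist_norm)
  also have "\<dots> = real (card Y) * (2 * real (card Y) * r\<^sup>2)"
    unfolding sum_sum_norm_diff_sq \<open>(\<Sum>y\<in>Y. (norm y)\<^sup>2) = _\<close> assms(5) by simp
  finally show ?thesis
    using \<open>real (card Y) > 0\<close> by simp
qed

lemma equidistant_sphere_not_affine_dependent:
  fixes Y :: "'a::real_inner set"
  assumes "finite Y" "Y \<subseteq> sphere 0 r" "equidistant Y c" "c \<noteq> 0"
  shows "\<not> affine_dependent Y"
proof
  have inner: "inner v w = (r\<^sup>2 - c\<^sup>2 / 2) + (if v = w then c\<^sup>2 / 2 else 0)" if "v \<in> Y" "w \<in> Y" for v w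
  proof (cases "v = w")
    case True
    then show ?thesis
      using assms(2) that by (auto simp flip: power2_norm_eq_inner)
  next
    case False
    have "c\<^sup>2 = (norm (v - w))\<^sup>2"
      using assms(3) that False unfolding equidistant_def by (simp add: dist_norm)
    also have "\<dots> = 2 * r\<^sup>2 - 2 * inner v w"
      using assms(2) that by (simp add: power2_norm_diff subset_iff)
    finally show ?thesis
      using False by (simp add: field_simps)
  qed
  assume "affine_dependent Y"
  then obtain U v where U: "sum U Y = 0" "(\<Sum>w\<in>Y. U w *\<^sub>R w) = 0" and v: "v \<in> Y" "U v \<noteq> 0"
    using affine_dependent_explicit_finite[OF assms(1)] by blast
  have "0 = inner v (\<Sum>w\<in>Y. U w *\<^sub>R w)"
    using U(2) by simp
  also have "\<dots> = (\<Sum>w\<in>Y. U w * (r\<^sup>2 - c\<^sup>2 / 2) + (if v = w then U w * c\<^sup>2 / 2 else 0))"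
    unfolding inner_sum_right inner_scaleR_right
    by (intro sum.cong refl) (auto simp: inner[OF v(1)] algebra_simps)
  also have "\<dots> = U v * c\<^sup>2 / 2"
    using assms(1) v(1) U(1) by (simp add: sum.distrib flip: sum_distrib_right)
  finally show False
    using v(2) assms(4) by simp
qed

lemma regular_simplex_edge_length:
  fixes Y :: "'a::euclidean_space set"
  assumes "regular_simplex_vertices n Y" "smallest_circumsphere Y r" "equidistant Y c" "1 \<le> n"
  shows "(real n - 1) * c\<^sup>2 = 2 * real n * r\<^sup>2"
proof -
  have fin: "finite Y" and card: "card Y = n"
    using assms(1) unfolding regular_simplex_vertices_def by auto
  then have ne: "Y \<noteq> {}"
    using assms(4) by auto
  obtain \<rho> where "Y \<subseteq> sphere ((1 / real (card Y)) *\<^sub>R \<Sum>Y) \<rho>"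
    using equidistant_centroid_sphere[OF fin assms(3)] .
  then have "\<Sum>Y = 0"
    by (rule smallest_circumsphere_centroid_eq_0[OF fin ne assms(2)])
  moreover have "Y \<subseteq> sphere 0 r"
    using assms(2) unfolding smallest_circumsphere_def by blast
  ultimately show ?thesis
    using equidistant_sphere_edge_length[OF fin ne assms(3)] card by simp
qed

lemma mst_length_regular_simplex:
  fixes Y :: "'a::euclidean_space set"
  assumes "regular_simplex_vertices n Y" "smallest_circumsphere Y r" "1 \<le> n"
  shows "mst_length Y = sqrt (2 * real n * (real n - 1)) * r"
proof -
  obtain c where c: "equidistant Y c"
    using assms(1) unfolding regular_simplex_vertices_def equidistant_def by blast
  have fin: "finite Y" and card: "card Y = n"
    using assms(1) unfolding regular_simplex_vertices_def by auto
  then obtain y0 where y0: "y0 \<in> Y"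
    using assms(3) by fastforce
  have "r \<ge> 0"
    using assms(2) y0 unfolding smallest_circumsphere_def by (metis mem_sphere_0 norm_ge_zero subsetD)
  have mst: "mst_length Y = (real n - 1) * c"
    using mst_length_equidistant[OF fin y0 c] card by simp
  have "0 \<le> mst_length Y"
    using y0 graph_length_nonneg by (rule mst_length_greatest)
  have "(mst_length Y)\<^sup>2 = (real n - 1) * ((real n - 1) * c\<^sup>2)"
    unfolding mst by (simp add: power2_eq_square)
  also have "\<dots> = (real n - 1) * (2 * real n * r\<^sup>2)"
    using regular_simplex_edge_length[OF assms(1,2) c assms(3)] by simp
  also have "\<dots> = (sqrt (2 * real n * (real n - 1)) * r)\<^sup>2"
    using assms(3) by (simp add: power_mult_distrib)
  finally show ?thesis
    using \<open>0 \<le> mst_length Y\<close> \<open>r \<ge> 0\<close> assms(3) by (simp add: power2_eq_iff_nonneg)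
qed

(* For m = card E the coefficient t is the negative root of m t^2 - 2 t - 1 = 0, which says
   exactly that t \<Sum>E lies at distance sqrt 2 from every vector of E. *)
definition simplex_apex :: "'a::euclidean_space set \<Rightarrow> 'a" where
  "simplex_apex E = (- 1 / (1 + sqrt (real (card E) + 1))) *\<^sub>R \<Sum>E"

lemma norm_simplex_apex_minus_Basis:
  fixes E :: "'a::euclidean_space set"
  assumes "finite E" "E \<subseteq> Basis" "b \<in> E"
  shows "(norm (simplex_apex E - b))\<^sup>2 = 2"
proof -
  define q where "q = sqrt (real (card E) + 1)"
  have "q \<ge> 1" and q2: "real (card E) = q\<^sup>2 - 1"
    unfolding q_def by simp_all
  have inner_sum: "inner b' (\<Sum>E) = 1" if "b' \<in> E" for b'
    using assms(1,2) that by (simp add: inner_sum_right inner_Basis subsetD)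
  have "(norm (\<Sum>E))\<^sup>2 = q\<^sup>2 - 1"
    using inner_sum q2 by (simp add: power2_norm_eq_inner inner_sum_left)
  then have "(norm (simplex_apex E))\<^sup>2 = (1 / (1 + q))\<^sup>2 * (q\<^sup>2 - 1)"
    unfolding simplex_apex_def q_def by (simp add: power_divide)
  moreover have "inner (simplex_apex E) b = - 1 / (1 + q)"
    using inner_sum[OF assms(3)] unfolding simplex_apex_def q_def by (simp add: inner_commute)
  moreover have "norm b = 1"
    using assms(2,3) by (simp add: norm_Basis subsetD)
  ultimately have "(norm (simplex_apex E - b))\<^sup>2 = (1 / (1 + q))\<^sup>2 * (q\<^sup>2 - 1) + 2 / (1 + q) + 1"
    by (simp add: power2_norm_diff)
  also have "\<dots> = 2"
  proof -
    have "1 + q \<noteq> 0"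
      using \<open>q \<ge> 1\<close> by simp
    then have "(1 / (1 + q))\<^sup>2 * (q\<^sup>2 - 1) = (q - 1) / (1 + q)"
      by (simp add: power2_eq_square divide_simps) (simp add: algebra_simps)
    then show ?thesis
      using \<open>1 + q \<noteq> 0\<close> by (simp add: divide_simps)
  qed
  finally show ?thesis .
qed

lemma exists_equidistant_sqrt2:
  assumes "1 \<le> n" "n \<le> DIM('a::euclidean_space) + 1"
  obtains V :: "'a::euclidean_space set" where "finite V" "card V = n" "equidistant V (sqrt 2)"
proof -
  have "n - 1 \<le> card (Basis :: 'a set)"
    using assms(2) by simp
  then obtain E :: "'a set" where E: "E \<subseteq> Basis" "card E = n - 1" "finite E"
    by (rule obtain_subset_with_card_n)
  define p where "p = simplex_apex E"
  have dist_E: "(norm (b - b'))\<^sup>2 = 2" if "b \<in> E" "b' \<in> E" "b \<noteq> b'" for b b'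
    using E(1) that by (simp add: power2_norm_diff inner_Basis norm_Basis subsetD)
  have dist_p: "(norm (p - b))\<^sup>2 = 2" if "b \<in> E" for b
    unfolding p_def using E(3,1) that by (rule norm_simplex_apex_minus_Basis)
  then have "p \<notin> E"
    by fastforce
  define V where "V = insert p E"
  have "dist x y = sqrt 2" if "x \<in> V" "y \<in> V" "x \<noteq> y" for x y
  proof -
    have "(dist x y)\<^sup>2 = 2"
      using that dist_E unfolding V_def dist_norm
      by (auto simp: dist_p dist_p[unfolded norm_minus_commute[of p]])
    then show ?thesis
      by (metis real_sqrt_unique zero_le_dist)
  qed
  then show thesis
    using that[of V] E \<open>p \<notin> E\<close> assms(1) unfolding V_def equidistant_def by auto
qed

lemma exists_equidistant_sum_eq_0:
  assumes "1 \<le> n" "n \<le> DIM('a::euclidean_space) + 1" "c > 0"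
  obtains Y :: "'a::euclidean_space set" where "finite Y" "card Y = n" "equidistant Y c" "\<Sum>Y = 0"
proof -
  obtain V :: "'a set" where V: "finite V" "card V = n" "equidistant V (sqrt 2)"
    using exists_equidistant_sqrt2[OF assms(1,2)] .
  define k where "k = c / sqrt 2"
  define h where "h x = k *\<^sub>R (x - (1 / real n) *\<^sub>R \<Sum>V)" for x
  have "k > 0"
    using assms(3) unfolding k_def by simp
  have dist_h: "dist (h x) (h y) = k * dist x y" for x y
    using \<open>k > 0\<close> unfolding h_def dist_norm by (simp flip: scaleR_diff_right)
  then have inj: "inj_on h V"
    using \<open>k > 0\<close> by (intro inj_onI) (metis dist_eq_0_iff mult_eq_0_iff less_irrefl)
  have "equidistant (h ` V) c"
    unfolding equidistant_def
  proof (intro ballI impI)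
    fix x' y' assume "x' \<in> h ` V" "y' \<in> h ` V" "x' \<noteq> y'"
    then obtain x y where "x \<in> V" "y \<in> V" "x \<noteq> y" "x' = h x" "y' = h y"
      by blast
    then show "dist x' y' = c"
      using V(3) unfolding equidistant_def by (simp add: dist_h k_def)
  qed
  moreover have "\<Sum>(h ` V) = 0"
  proof -
    have "\<Sum>(h ` V) = (\<Sum>x\<in>V. h x)"
      using sum.reindex[OF inj, of "\<lambda>x. x"] by simp
    also have "\<dots> = k *\<^sub>R (\<Sum>V - real (card V) *\<^sub>R (1 / real n) *\<^sub>R \<Sum>V)"
      unfolding h_def by (simp add: sum_subtractf sum_constant_scaleR flip: scaleR_sum_right)
    also have "\<dots> = 0"
      using V(2) assms(1) by simp
    finally show ?thesis .
  qed
  ultimately show thesis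
    using that[of "h ` V"] V card_image[OF inj] by simp
qed

lemma exists_regular_simplex_smallest_circumsphere:
  assumes "r > 0" "2 \<le> n" "n \<le> DIM('a::euclidean_space) + 1"
  shows "\<exists>Y::'a set. regular_simplex_vertices n Y \<and> smallest_circumsphere Y r"
proof -
  define c where "c = r * sqrt (2 * real n / (real n - 1))"
  have "c > 0"
    using assms(1,2) unfolding c_def by simp
  obtain Y :: "'a set" where Y: "finite Y" "card Y = n" "equidistant Y c" "\<Sum>Y = 0"
    using exists_equidistant_sum_eq_0[OF _ assms(3) \<open>c > 0\<close>] assms(2) by auto
  have ne: "Y \<noteq> {}"
    using Y(2) assms(2) by auto
  obtain \<rho> where sphere: "Y \<subseteq> sphere 0 \<rho>"
    using equidistant_centroid_sphere[OF Y(1,3)] Y(4) by auto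
  have "\<rho> \<ge> 0"
    using sphere ne by auto
  have "(real n - 1) * c\<^sup>2 = 2 * real n * \<rho>\<^sup>2"
    using equidistant_sphere_edge_length[OF Y(1) ne Y(3) sphere Y(4)] Y(2) by simp
  moreover have "(real n - 1) * c\<^sup>2 = 2 * real n * r\<^sup>2"
    using assms(2) unfolding c_def by (simp add: power_mult_distrib)
  ultimately have "\<rho> = r"
    using \<open>\<rho> \<ge> 0\<close> assms(1,2) by (simp add: power2_eq_iff_nonneg)
  then have "regular_simplex_vertices n Y"
    using Y sphere equidistant_sphere_not_affine_dependent[OF Y(1) sphere Y(3)] \<open>c > 0\<close>
    unfolding regular_simplex_vertices_def equidistant_def by auto
  moreover have "smallest_circumsphere Y r"
    using smallest_circumsphere_if_sum_eq_0[OF Y(1) ne _ Y(4)] sphere \<open>\<rho> = r\<close> by simp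
  ultimately show ?thesis
    by blast
qed

theorem theorem1:
  fixes r :: real and n :: nat
  assumes "r > 0" and "2 \<le> n" and "n \<le> DIM('a::euclidean_space) + 1"
  shows "(\<exists>Y::'a set. regular_simplex_vertices n Y \<and> smallest_circumsphere Y r) \<and>
    (\<forall>Y::'a set. regular_simplex_vertices n Y \<and> smallest_circumsphere Y r \<longrightarrow>
       Y \<subseteq> cball 0 r \<and> card Y = n \<and>
       (\<forall>X::'a set. X \<subseteq> cball 0 r \<and> finite X \<and> card X = n \<longrightarrow> mst_length X \<le> mst_length Y))"
proof (intro conjI allI impI)
  show "\<exists>Y::'a set. regular_simplex_vertices n Y \<and> smallest_circumsphere Y r"
    using exists_regular_simplex_smallest_circumsphere[OF assms] .
next
  fix Y :: "'a set"
  assume "regular_simplex_vertices n Y \<and> smallest_circumsphere Y r"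
  then show "Y \<subseteq> cball 0 r" and "card Y = n"
    unfolding smallest_circumsphere_def regular_simplex_vertices_def using sphere_cball by blast+
next
  fix Y X :: "'a set"
  assume Y: "regular_simplex_vertices n Y \<and> smallest_circumsphere Y r"
    and X: "X \<subseteq> cball 0 r \<and> finite X \<and> card X = n"
  then have "mst_length X \<le> sqrt (2 * real n * (real n - 1)) * r"
    using mst_length_le_cball[of X r] assms(2) by fastforce
  also have "\<dots> = mst_length Y"
    using mst_length_regular_simplex[of n Y r] Y assms(2) by simp
  finally show "mst_length X \<le> mst_length Y" .
qed

end
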